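(* There exists an $8$-rep-tile $A\subset\mathbb{R}^3$ which has a hole in the following sense: $A$ is homeomorphic to a solid torus $D^2\times S^1$, and its interior is connected and homeomorphic to an open solid torus. More concretely, $A$ can be chosen as a union of four rectangular boxes, each congruent to $[0,4]\times[0,2]\times[0,1]$, with pairwise disjoint interiors, such that $A$ together with a copy of $A$ rotated by $180^\circ$ forms a rectangular box of size $8\times 4\times 2$. Moreover, eight copies of $A$ assemble to $2A$.
   Context: A closed bounded set $A\subset\mathbb{R}^d$ with non-empty interior is called an $m$-rep-tile if there are sets $A_1,\dots,A_m$, each congruent to $A$, such that any two different $A_j,A_k$ have no common interior points and the union $A_1\cup\dots\cup A_m$ is geometrically similar to $A$. Two sets are congruent if one is the image of the other under an isometry of $\mathbb{R}^d$. *)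

theory Defs
  imports "HOL-Analysis.Analysis"
begin

definition congruent :: "'a::metric_space set \<Rightarrow> 'a set \<Rightarrow> bool" where
  "congruent A B \<longleftrightarrow>
     (\<exists>f. surj f \<and> (\<forall>x y. dist (f x) (f y) = dist x y) \<and> f ` A = B)"

definition similar_sets :: "'a::metric_space set \<Rightarrow> 'a set \<Rightarrow> bool" where
  "similar_sets A B \<longleftrightarrow>
     (\<exists>f r. r > 0 \<and> surj f \<and> (\<forall>x y. dist (f x) (f y) = r * dist x y) \<and> f ` A = B)"

definition rep_tile :: "nat \<Rightarrow> 'a::euclidean_space set \<Rightarrow> bool" where
  "rep_tile m A \<longleftrightarrow> closed A \<and> bounded A \<and> interior A \<noteq> {} \<and>
     (\<exists>T :: nat \<Rightarrow> 'a set.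
        (\<forall>i<m. congruent (T i) A) \<and>
        (\<forall>i<m. \<forall>j<m. i \<noteq> j \<longrightarrow> interior (T i) \<inter> interior (T j) = {}) \<and>
        similar_sets (\<Union>i<m. T i) A)"

definition solid_torus :: "((real^2) \<times> (real^2)) set" where
  "solid_torus = cball 0 1 \<times> sphere 0 1"

definition open_solid_torus :: "((real^2) \<times> (real^2)) set" where
  "open_solid_torus = ball 0 1 \<times> sphere 0 1"

text \<open>A rotation by 180 degrees (half-turn about some axis), composed with a translation.\<close>
definition half_turn_motion :: "(real^3 \<Rightarrow> real^3) \<Rightarrow> bool" where
  "half_turn_motion g \<longleftrightarrow>
     (\<exists>R b. orthogonal_matrix R \<and> det R = 1 \<and> R ** R = mat 1 \<and> R \<noteq> mat 1 \<and>
            (\<forall>x. g x = R *v x + b))"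

end

theory Submission
  imports Defs
begin

(*
  The tile A is a ring: two plates [0,2] x [0,4] x [0,1] and [6,8] x [0,4] x [0,1] joined by two
  bridges [2,6] x [0,1] x [0,2] and [2,6] x [2,3] x [0,2]. The half-turn about the line y = 2, z = 1
  carries A onto the closure of its complement in the box [0,8] x [0,4] x [0,2], and four copies
  of this box, placed by coordinate permutations and translations, make up 2A.

  For the topology, A is deformed by homeomorphisms of R^3. A radial rescaling between the gauges
  of two rectangles moves points only inside the cone where the gauges differ, and there it maps
  the unit ball of one gauge onto that of the other. Three such rescalings flatten the bridges and
  trim the plates to a rectangular frame, and a piecewise linear map of the y-coordinate turns the
  frame into a shell {1 <= g <= 2} x [0,1] for a rectangular gauge g. Polar coordinates with respect
  to g identify the shell with ([1,2] x [0,1]) x S^1, and invariance of domain passes this on to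
  the interiors.
*)

lemma image_eq_if_inverse:
  assumes "\<And>y. f (g y) = y" and "\<And>x. f x \<in> T \<longleftrightarrow> x \<in> S"
  shows "f ` S = T"
proof (intro equalityI subsetI)
  show "y \<in> T" if "y \<in> f ` S" for y
    using that assms(2) by blast
  show "y \<in> f ` S" if "y \<in> T" for y
  proof
    show "y = f (g y)"
      using assms(1) by simp
    then show "g y \<in> S"
      using assms(2)[of "g y"] that by simp
  qed
qed

section \<open>Plane gauges and radial rescalings\<close>

definition plane_gauge :: "(real \<Rightarrow> real \<Rightarrow> real) \<Rightarrow> bool" where
  "plane_gauge g \<longleftrightarrow> continuous_on UNIV (\<lambda>z. g (fst z) (snd z)) \<and>
     (\<forall>t a b. 0 < t \<longrightarrow> g (t * a) (t * b) = t * g a b) \<and>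
     (\<forall>a b. (a, b) \<noteq> (0, 0) \<longrightarrow> 0 < g a b)"

lemma plane_gauge_homogeneous: "plane_gauge g \<Longrightarrow> 0 < t \<Longrightarrow> g (t * a) (t * b) = t * g a b"
  unfolding plane_gauge_def by blast

lemma plane_gauge_pos: "plane_gauge g \<Longrightarrow> (a, b) \<noteq> (0, 0) \<Longrightarrow> 0 < g a b"
  unfolding plane_gauge_def by blast

lemma plane_gauge_zero: "plane_gauge g \<Longrightarrow> g 0 0 = 0"
  using plane_gauge_homogeneous[of g 2 0 0] by simp

lemma plane_gauge_nonneg: "plane_gauge g \<Longrightarrow> 0 \<le> g a b"
  using plane_gauge_zero[of g] plane_gauge_pos[of g a b] by (cases "(a, b) = (0, 0)") auto

lemma continuous_on_plane_gauge:
  assumes "plane_gauge g" "continuous_on S f" "continuous_on S h"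
  shows "continuous_on S (\<lambda>x. g (f x) (h x))"
proof -
  have "continuous_on UNIV (\<lambda>z. g (fst z) (snd z))"
    using assms(1) unfolding plane_gauge_def by blast
  from continuous_on_compose2[OF this continuous_on_Pair[OF assms(2,3)]] show ?thesis
    by simp
qed

lemma plane_gauge_quotient_bounded_on_circle:
  assumes g: "plane_gauge g" and h: "plane_gauge h"
  obtains K where "\<And>z. z \<in> sphere 0 1 \<Longrightarrow> g (fst z) (snd z) / h (fst z) (snd z) \<le> K"
proof -
  let ?C = "sphere (0 :: real \<times> real) 1"
  define f where "f z = g (fst z) (snd z) / h (fst z) (snd z)" for z
  have "h (fst z) (snd z) \<noteq> 0" if "z \<in> ?C" for z
  proof -
    have "(fst z, snd z) \<noteq> (0, 0)"
      using that by (metis mem_sphere_0 norm_zero prod.collapse zero_neq_one zero_prod_def)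
    then show ?thesis
      using plane_gauge_pos[OF h] by (metis less_irrefl)
  qed
  then have "continuous_on ?C f"
    unfolding f_def
    by (intro continuous_intros continuous_on_plane_gauge[OF g] continuous_on_plane_gauge[OF h]) auto
  then have "bounded (f ` ?C)"
    by (intro compact_imp_bounded compact_continuous_image compact_sphere)
  then obtain K where "\<forall>x \<in> f ` ?C. \<bar>x\<bar> \<le> K"
    unfolding bounded_real by blast
  then have "f z \<le> K" if "z \<in> ?C" for z
    using that by (meson abs_le_D1 imageI)
  then show thesis
    by (intro that[of K]) (simp add: f_def)
qed

lemma plane_gauges_comparable:
  assumes g: "plane_gauge g" and h: "plane_gauge h"
  obtains K where "\<And>a b. g a b \<le> K * h a b"
proof -
  obtain K where K: "\<And>z. z \<in> sphere 0 1 \<Longrightarrow> g (fst z) (snd z) / h (fst z) (snd z) \<le> K"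
    using plane_gauge_quotient_bounded_on_circle[OF g h] by blast
  have "g a b \<le> K * h a b" for a b
  proof (cases "(a, b) = (0, 0)")
    case True
    then show ?thesis by (simp add: plane_gauge_zero g h)
  next
    case False
    define t where "t = norm (a, b)"
    have t: "0 < t" using False by (simp add: t_def zero_prod_def)
    have "norm ((1 / t) *\<^sub>R (a, b)) = 1"
      unfolding norm_scaleR using t by (simp add: t_def)
    then have "(a / t, b / t) \<in> sphere 0 1"
      by (simp add: divide_inverse_commute)
    moreover have "0 < h (a / t) (b / t)"
      using False t by (intro plane_gauge_pos[OF h]) auto
    ultimately have "g (a / t) (b / t) \<le> K * h (a / t) (b / t)"
      using K[of "(a / t, b / t)"] by (simp add: divide_le_eq)
    then have "t * g (a / t) (b / t) \<le> K * (t * h (a / t) (b / t))"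
      using t by (simp add: algebra_simps)
    then show ?thesis
      using t plane_gauge_homogeneous[OF g t, of "a/t" "b/t"] plane_gauge_homogeneous[OF h t, of "a/t" "b/t"]
      by simp
  qed
  then show thesis by (rule that)
qed

definition rect_gauge :: "real \<Rightarrow> real \<Rightarrow> real \<Rightarrow> real \<Rightarrow> real \<Rightarrow> real" where
  "rect_gauge w l u a b = max (\<bar>a\<bar> / w) (max (- b / l) (b / u))"

lemma plane_gauge_rect_gauge:
  assumes "0 < w" "0 < l" "0 < u"
  shows "plane_gauge (rect_gauge w l u)"
  unfolding plane_gauge_def
proof (intro conjI allI impI)
  show "continuous_on UNIV (\<lambda>z. rect_gauge w l u (fst z) (snd z))"
    unfolding rect_gauge_def by (intro continuous_intros) (use assms in auto)
  show "rect_gauge w l u (t * a) (t * b) = t * rect_gauge w l u a b" if "0 < t" for t a b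
    using that by (simp add: rect_gauge_def abs_mult max_mult_distrib_left)
  show "0 < rect_gauge w l u a b" if "(a, b) \<noteq> (0, 0)" for a b
    using that assms by (auto simp: rect_gauge_def less_max_iff_disj zero_less_divide_iff divide_less_0_iff)
qed

lemma rect_gauge_le_iff:
  assumes "0 < w" "0 < l" "0 < u"
  shows "rect_gauge w l u a b \<le> c \<longleftrightarrow> \<bar>a\<bar> \<le> c * w \<and> - (c * l) \<le> b \<and> b \<le> c * u"
  using assms by (auto simp: rect_gauge_def pos_divide_le_eq minus_le_iff[of "b / l"] pos_le_divide_eq)

lemma rect_gauge_less_iff:
  assumes "0 < w" "0 < l" "0 < u"
  shows "rect_gauge w l u a b < c \<longleftrightarrow> \<bar>a\<bar> < c * w \<and> - (c * l) < b \<and> b < c * u"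
  using assms by (auto simp: rect_gauge_def pos_divide_less_eq minus_less_iff[of "b / l"] pos_less_divide_eq)

lemma rect_gauge_eq_iff:
  assumes "0 < w" "0 < l" "0 < u" "u < u'"
  shows "rect_gauge w l u' a b = rect_gauge w l u a b \<longleftrightarrow> b \<le> 0 \<or> b * w \<le> \<bar>a\<bar> * u"
proof (cases "b \<le> 0")
  case True
  have "b / u' \<le> 0" "b / u \<le> 0" "0 \<le> - b / l"
    using True assms by (simp_all add: divide_nonpos_pos)
  then have "b / u' \<le> - b / l" "b / u \<le> - b / l"
    by linarith+
  then show ?thesis
    using True by (simp add: rect_gauge_def max_absorb1)
next
  case False
  have "- b / l < 0" "b / u' < b / u" "0 \<le> \<bar>a\<bar> / w"
    using False assms by (simp_all add: divide_strict_left_mono)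
  then have "rect_gauge w l u' a b = rect_gauge w l u a b \<longleftrightarrow> b / u \<le> \<bar>a\<bar> / w"
    by (auto simp: rect_gauge_def max_def)
  also have "\<dots> \<longleftrightarrow> b * w \<le> \<bar>a\<bar> * u"
    using assms by (simp add: divide_le_eq le_divide_eq field_simps)
  finally show ?thesis
    using False by simp
qed

definition gauge_at :: "(real \<Rightarrow> real \<Rightarrow> real) \<Rightarrow> 'n \<Rightarrow> 'n \<Rightarrow> real^'n \<Rightarrow> real^'n \<Rightarrow> real" where
  "gauge_at g i j c p = g (p$i - c$i) (p$j - c$j)"

(* On the axis both gauges vanish; the junk value 0 / 0 = 0 is harmless there,
   since the offsets vanish too. *)
definition radial_rescale ::
    "(real \<Rightarrow> real \<Rightarrow> real) \<Rightarrow> (real \<Rightarrow> real \<Rightarrow> real) \<Rightarrow> 'n \<Rightarrow> 'n \<Rightarrow> real^'n \<Rightarrow> real^'n \<Rightarrow> real^'n" where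
  "radial_rescale g h i j c p =
     (\<chi> k. if k = i \<or> k = j then c$k + gauge_at g i j c p / gauge_at h i j c p * (p$k - c$k) else p$k)"

lemma continuous_on_gauge_at:
  assumes "plane_gauge f"
  shows "continuous_on S (gauge_at f i j c)"
  unfolding gauge_at_def by (intro continuous_on_plane_gauge[OF assms] continuous_intros)

lemma radial_rescale_nth:
  "radial_rescale g h i j c p $ k =
     (if k = i \<or> k = j then c$k + gauge_at g i j c p / gauge_at h i j c p * (p$k - c$k) else p$k)"
  by (simp add: radial_rescale_def)

context
  fixes g h :: "real \<Rightarrow> real \<Rightarrow> real" and i j :: "'n::finite" and c :: "real^'n"
  assumes g: "plane_gauge g" and h: "plane_gauge h" and ij: "i \<noteq> j"
begin

lemma gauge_at_radial_rescale:
  assumes f: "plane_gauge f"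
  shows "gauge_at f i j c (radial_rescale g h i j c p) =
           gauge_at g i j c p / gauge_at h i j c p * gauge_at f i j c p"
proof (cases "(p$i - c$i, p$j - c$j) = (0, 0)")
  case True
  then show ?thesis
    by (simp add: gauge_at_def radial_rescale_def plane_gauge_zero[OF f])
next
  case False
  define \<rho> where "\<rho> = gauge_at g i j c p / gauge_at h i j c p"
  have "0 < \<rho>"
    unfolding \<rho>_def gauge_at_def using False plane_gauge_pos[OF g] plane_gauge_pos[OF h] by simp
  have "gauge_at f i j c (radial_rescale g h i j c p) = f (\<rho> * (p$i - c$i)) (\<rho> * (p$j - c$j))"
    by (simp add: gauge_at_def radial_rescale_nth \<rho>_def)
  also have "\<dots> = \<rho> * gauge_at f i j c p"
    using plane_gauge_homogeneous[OF f \<open>0 < \<rho>\<close>] by (simp add: gauge_at_def)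
  finally show ?thesis
    unfolding \<rho>_def .
qed

lemma gauge_at_radial_rescale_target:
  "gauge_at h i j c (radial_rescale g h i j c p) = gauge_at g i j c p"
proof (cases "(p$i - c$i, p$j - c$j) = (0, 0)")
  case True
  then show ?thesis
    by (simp add: gauge_at_radial_rescale[OF h]) (simp add: gauge_at_def plane_gauge_zero[OF g])
next
  case False
  then show ?thesis
    unfolding gauge_at_radial_rescale[OF h] using plane_gauge_pos[OF h False]
    by (simp add: gauge_at_def)
qed

lemma radial_rescale_fixpoint:
  assumes "gauge_at g i j c p = gauge_at h i j c p"
  shows "radial_rescale g h i j c p = p"
proof (cases "(p$i - c$i, p$j - c$j) = (0, 0)")
  case True
  then show ?thesis
    by (auto simp: radial_rescale_def vec_eq_iff)
next
  case False
  then have "gauge_at h i j c p \<noteq> 0"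
    unfolding gauge_at_def using plane_gauge_pos[OF h] by (metis less_irrefl)
  then show ?thesis
    using assms by (simp add: radial_rescale_def vec_eq_iff)
qed

lemma radial_rescale_inverse: "radial_rescale h g i j c (radial_rescale g h i j c p) = p"
proof (cases "(p$i - c$i, p$j - c$j) = (0, 0)")
  case True
  then show ?thesis
    by (auto simp: radial_rescale_def vec_eq_iff)
next
  case False
  define \<rho> where "\<rho> = gauge_at g i j c p / gauge_at h i j c p"
  have "0 < gauge_at g i j c p" "0 < gauge_at h i j c p"
    unfolding gauge_at_def using False plane_gauge_pos[OF g] plane_gauge_pos[OF h] by simp_all
  then have "\<rho> \<noteq> 0"
    "gauge_at h i j c (radial_rescale g h i j c p) / gauge_at g i j c (radial_rescale g h i j c p) = 1 / \<rho>"
    by (simp_all add: \<rho>_def gauge_at_radial_rescale[OF g] gauge_at_radial_rescale_target)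
  then show ?thesis
    by (simp add: vec_eq_iff radial_rescale_nth[of h g] radial_rescale_nth[of g h] \<rho>_def[symmetric])
qed

lemma gauge_at_quotient_bounded:
  obtains K where "0 \<le> K" "\<And>q. \<bar>gauge_at g i j c q / gauge_at h i j c q\<bar> \<le> K"
proof -
  obtain K where K: "\<And>a b. g a b \<le> K * h a b"
    using plane_gauges_comparable[OF g h] by blast
  have "\<bar>gauge_at g i j c q / gauge_at h i j c q\<bar> \<le> \<bar>K\<bar>" for q
  proof (cases "gauge_at h i j c q = 0")
    case False
    then have h_pos: "0 < gauge_at h i j c q"
      using plane_gauge_nonneg[OF h] by (simp add: gauge_at_def order_less_le)
    have "gauge_at g i j c q \<le> K * gauge_at h i j c q"
      using K by (simp add: gauge_at_def)
    also have "\<dots> \<le> \<bar>K\<bar> * gauge_at h i j c q"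
      using h_pos by (intro mult_right_mono) auto
    finally have "gauge_at g i j c q / gauge_at h i j c q \<le> \<bar>K\<bar>"
      using h_pos by (simp add: pos_divide_le_eq)
    moreover have "0 \<le> gauge_at g i j c q / gauge_at h i j c q"
      using h_pos plane_gauge_nonneg[OF g] by (simp add: gauge_at_def)
    ultimately show ?thesis
      by simp
  qed simp
  then show thesis
    by (intro that[of "\<bar>K\<bar>"]) simp_all
qed

lemma radial_rescale_lipschitz_on_axis:
  assumes p: "p$i = c$i" "p$j = c$j"
  obtains L where "\<And>q. norm (radial_rescale g h i j c q - p) \<le> L * norm (q - p)"
proof -
  obtain K where "0 \<le> K" and ratio: "\<And>q. \<bar>gauge_at g i j c q / gauge_at h i j c q\<bar> \<le> K"
    using gauge_at_quotient_bounded by blast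
  have "norm (radial_rescale g h i j c q - p) \<le> norm ((K + 1) *\<^sub>R (q - p))" for q
  proof (rule norm_le_componentwise_cart)
    fix k
    show "norm ((radial_rescale g h i j c q - p) $ k) \<le> norm (((K + 1) *\<^sub>R (q - p)) $ k)"
    proof (cases "k = i \<or> k = j")
      case True
      then have "(radial_rescale g h i j c q - p) $ k = gauge_at g i j c q / gauge_at h i j c q * (q$k - p$k)"
        using p by (auto simp: radial_rescale_nth)
      moreover have "\<bar>gauge_at g i j c q / gauge_at h i j c q * (q$k - p$k)\<bar> \<le> (K + 1) * \<bar>q$k - p$k\<bar>"
        unfolding abs_mult using ratio[of q] by (intro mult_right_mono) auto
      ultimately show ?thesis
        using \<open>0 \<le> K\<close> by (simp add: abs_mult)
    next
      case False
      then show ?thesis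
        using \<open>0 \<le> K\<close> mult_right_mono[of 1 "K + 1" "\<bar>q$k - p$k\<bar>"]
        by (simp add: radial_rescale_nth abs_mult)
    qed
  qed
  then show thesis
    using \<open>0 \<le> K\<close> by (intro that[of "K + 1"]) simp
qed

lemma isCont_radial_rescale_on_axis:
  assumes "p$i = c$i" "p$j = c$j"
  shows "isCont (radial_rescale g h i j c) p"
proof -
  obtain L where L: "\<And>q. norm (radial_rescale g h i j c q - p) \<le> L * norm (q - p)"
    using radial_rescale_lipschitz_on_axis[OF assms] by blast
  have fix_p: "radial_rescale g h i j c p = p"
    using assms by (auto simp: radial_rescale_def vec_eq_iff)
  have "eventually (\<lambda>q. norm (radial_rescale g h i j c q - p) \<le> L * norm (q - p)) (at p)"
    using L by (simp add: always_eventually)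
  moreover have "((\<lambda>q. L * norm (q - p)) \<longlongrightarrow> 0) (at p)"
    using tendsto_mult_right_zero[OF tendsto_norm_zero[OF LIM_zero[OF tendsto_ident_at]]] .
  ultimately have "((\<lambda>q. radial_rescale g h i j c q - p) \<longlongrightarrow> 0) (at p)"
    by (rule Lim_null_comparison)
  then show ?thesis
    unfolding isCont_def fix_p Lim_null[of "radial_rescale g h i j c" p] .
qed

lemma continuous_on_radial_rescale_off_axis:
  "continuous_on {q. gauge_at h i j c q \<noteq> 0} (radial_rescale g h i j c)"
  unfolding radial_rescale_def
proof (rule continuous_on_vec_lambda)
  fix k
  have "continuous_on {q. gauge_at h i j c q \<noteq> 0}
          (\<lambda>q. c$k + gauge_at g i j c q / gauge_at h i j c q * (q$k - c$k))"
    by (intro continuous_on_add continuous_on_mult continuous_on_divide continuous_on_diff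
        continuous_on_const continuous_on_component continuous_on_id
        continuous_on_gauge_at[OF g] continuous_on_gauge_at[OF h]) auto
  then show "continuous_on {q. gauge_at h i j c q \<noteq> 0}
      (\<lambda>q. if k = i \<or> k = j then c$k + gauge_at g i j c q / gauge_at h i j c q * (q$k - c$k) else q$k)"
    by (cases "k = i \<or> k = j") (simp_all add: continuous_on_component continuous_on_id)
qed

lemma continuous_on_radial_rescale: "continuous_on UNIV (radial_rescale g h i j c)"
proof (rule continuous_at_imp_continuous_on, rule ballI)
  fix p :: "real^'n"
  show "isCont (radial_rescale g h i j c) p"
  proof (cases "p$i = c$i \<and> p$j = c$j")
    case True
    then show ?thesis
      by (simp add: isCont_radial_rescale_on_axis)
  next
    case False
    then have "p \<in> {q. gauge_at h i j c q \<noteq> 0}"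
      using plane_gauge_pos[OF h, of "p$i - c$i" "p$j - c$j"] by (auto simp: gauge_at_def)
    moreover have "open {q. gauge_at h i j c q \<noteq> 0}"
      by (rule open_Collect_neq[OF continuous_on_gauge_at[OF h] continuous_on_const])
    ultimately show ?thesis
      using continuous_on_radial_rescale_off_axis continuous_on_eq_continuous_at by blast
  qed
qed

lemma radial_rescale_mem:
  assumes k: "k \<noteq> i" "k \<noteq> j" and R: "R \<subseteq> {p. gauge_at g i j c p = gauge_at h i j c p}"
  shows "radial_rescale g h i j c p \<in> {p. gauge_at h i j c p \<le> 1 \<and> p$k \<in> Z} \<union> R \<longleftrightarrow>
           p \<in> {p. gauge_at g i j c p \<le> 1 \<and> p$k \<in> Z} \<union> R"
proof (cases "gauge_at g i j c p = gauge_at h i j c p")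
  case True
  then show ?thesis
    by (simp add: radial_rescale_fixpoint[OF True])
next
  case False
  define q where "q = radial_rescale g h i j c p"
  have off: "(p$i - c$i, p$j - c$j) \<noteq> (0, 0)"
    using False by (auto simp: gauge_at_def plane_gauge_zero[OF g] plane_gauge_zero[OF h])
  define \<rho> where "\<rho> = gauge_at g i j c p / gauge_at h i j c p"
  have "0 < \<rho>"
    using plane_gauge_pos[OF g off] plane_gauge_pos[OF h off] by (simp add: \<rho>_def gauge_at_def)
  moreover have "gauge_at g i j c q = \<rho> * gauge_at g i j c p" "gauge_at h i j c q = \<rho> * gauge_at h i j c p"
    by (simp_all only: q_def \<rho>_def gauge_at_radial_rescale[OF g] gauge_at_radial_rescale[OF h])
  ultimately have "gauge_at g i j c q \<noteq> gauge_at h i j c q"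
    using False by simp
  then have "q \<notin> R" "p \<notin> R"
    using False R by blast+
  moreover have "gauge_at h i j c q = gauge_at g i j c p" "q$k = p$k"
    using k by (simp_all add: q_def gauge_at_radial_rescale_target radial_rescale_nth)
  ultimately show ?thesis
    unfolding q_def by simp
qed

end

lemma homeomorphism_radial_rescale:
  assumes "plane_gauge g" "plane_gauge h" "i \<noteq> j"
  shows "homeomorphism UNIV UNIV (radial_rescale g h i j c) (radial_rescale h g i j c)"
  using assms by (intro homeomorphismI) (auto simp: continuous_on_radial_rescale radial_rescale_inverse)

lemma radial_rescale_image:
  assumes g: "plane_gauge g" and h: "plane_gauge h" and ij: "i \<noteq> j" and k: "k \<noteq> i" "k \<noteq> j"
    and S: "S = {p. gauge_at g i j c p \<le> 1 \<and> p$k \<in> Z} \<union> R"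
    and T: "T = {p. gauge_at h i j c p \<le> 1 \<and> p$k \<in> Z} \<union> R"
    and R: "R \<subseteq> {p. gauge_at g i j c p = gauge_at h i j c p}"
  shows "radial_rescale g h i j c ` S = T"
  unfolding S T
  by (rule image_eq_if_inverse[where g = "radial_rescale h g i j c"])
    (rule radial_rescale_inverse[OF h g ij], rule radial_rescale_mem[OF g h ij k R])

definition map_coord :: "'n::finite \<Rightarrow> (real \<Rightarrow> real) \<Rightarrow> real^'n \<Rightarrow> real^'n" where
  "map_coord k f p = (\<chi> i. if i = k then f (p$i) else p$i)"

lemma homeomorphism_map_coord:
  fixes k :: "'n::finite"
  assumes "homeomorphism UNIV UNIV f f'"
  shows "homeomorphism UNIV UNIV (map_coord k f) (map_coord k f')"
proof -
  have cont: "continuous_on UNIV (map_coord k h)" if "continuous_on UNIV h" for h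
    unfolding map_coord_def
  proof (rule continuous_on_vec_lambda)
    fix i :: 'n
    have "continuous_on UNIV (\<lambda>p::real^'n. h (p$i))"
      by (rule continuous_on_compose2[OF that continuous_on_component[OF continuous_on_id]]) simp
    then show "continuous_on UNIV (\<lambda>p. if i = k then h (p$i) else p$i)"
      by (cases "i = k") (simp_all add: continuous_on_component continuous_on_id)
  qed
  have "continuous_on UNIV f" "continuous_on UNIV f'" "\<And>x. f' (f x) = x" "\<And>y. f (f' y) = y"
    using assms by (auto simp: homeomorphism_def)
  then show ?thesis
    by (intro homeomorphismI cont) (auto simp: map_coord_def vec_eq_iff)
qed

lemma map_coord_nth:
  fixes p :: "real^3"
  shows "map_coord 2 f p $ 1 = p$1" "map_coord 2 f p $ 2 = f (p$2)" "map_coord 2 f p $ 3 = p$3"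
  by (simp_all add: map_coord_def)

section \<open>Gauge cylinders\<close>

lemma vector_2_eq_axis: "(vector [a, b] :: real^2) = a *\<^sub>R axis 1 1 + b *\<^sub>R axis 2 1"
  by (simp add: vec_eq_iff forall_2 axis_def)

lemma vector_3_eq_axis: "(vector [a, b, c] :: real^3) = a *\<^sub>R axis 1 1 + b *\<^sub>R axis 2 1 + c *\<^sub>R axis 3 1"
  by (simp add: vec_eq_iff forall_3 axis_def)

definition plane_offset :: "real^3 \<Rightarrow> real^3 \<Rightarrow> real^2" where
  "plane_offset c p = vector [p$1 - c$1, p$2 - c$2]"

definition gauge_polar :: "(real \<Rightarrow> real \<Rightarrow> real) \<Rightarrow> real^3 \<Rightarrow> real^3 \<Rightarrow> (real \<times> real) \<times> (real^2)" where
  "gauge_polar g c p = ((gauge_at g 1 2 c p, p$3), sgn (plane_offset c p))"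

definition gauge_unpolar :: "(real \<Rightarrow> real \<Rightarrow> real) \<Rightarrow> real^3 \<Rightarrow> (real \<times> real) \<times> (real^2) \<Rightarrow> real^3" where
  "gauge_unpolar g c x =
     (let r = fst (fst x); z = snd (fst x); u = snd x; t = r / g (u$1) (u$2)
      in vector [c$1 + t * u$1, c$2 + t * u$2, z])"

lemma gauge_unpolar_eq:
  "gauge_unpolar g c ((r, z), u) =
     vector [c$1 + r / g (u$1) (u$2) * u$1, c$2 + r / g (u$1) (u$2) * u$2, z]"
  by (simp add: gauge_unpolar_def)

lemma gauge_at_plane_offset: "gauge_at g 1 2 c p = g (plane_offset c p $ 1) (plane_offset c p $ 2)"
  by (simp add: plane_offset_def gauge_at_def)

lemma plane_offset_gauge_unpolar:
  "plane_offset c (gauge_unpolar g c ((r, z), u)) = (r / g (u$1) (u$2)) *\<^sub>R u"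
  by (simp add: plane_offset_def gauge_unpolar_def vec_eq_iff forall_2)

context
  fixes g :: "real \<Rightarrow> real \<Rightarrow> real" and c :: "real^3"
  assumes g: "plane_gauge g"
begin

lemma plane_offset_nonzero: "0 < gauge_at g 1 2 c p \<Longrightarrow> plane_offset c p \<noteq> 0"
  using plane_gauge_zero[OF g] by (auto simp: gauge_at_plane_offset)

lemma gauge_sphere_pos:
  assumes "(u::real^2) \<in> sphere 0 1"
  shows "0 < g (u$1) (u$2)"
proof (rule plane_gauge_pos[OF g])
  have "u \<noteq> 0"
    using assms by auto
  then show "(u$1, u$2) \<noteq> (0, 0)"
    by (simp add: vec_eq_iff forall_2)
qed

lemma gauge_polar_unpolar:
  assumes "0 < r" "u \<in> sphere 0 1"
  shows "gauge_polar g c (gauge_unpolar g c ((r, z), u)) = ((r, z), u)"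
proof -
  define t where "t = r / g (u$1) (u$2)"
  have "0 < t"
    using assms gauge_sphere_pos by (simp add: t_def)
  have "gauge_at g 1 2 c (gauge_unpolar g c ((r, z), u)) = g (t * u$1) (t * u$2)"
    by (simp only: gauge_at_plane_offset plane_offset_gauge_unpolar t_def vector_scaleR_component
        real_scaleR_def)
  also have "\<dots> = t * g (u$1) (u$2)"
    by (rule plane_gauge_homogeneous[OF g \<open>0 < t\<close>])
  also have "\<dots> = r"
    using gauge_sphere_pos[OF assms(2)] by (simp add: t_def)
  finally have "gauge_at g 1 2 c (gauge_unpolar g c ((r, z), u)) = r" .
  moreover have "sgn (plane_offset c (gauge_unpolar g c ((r, z), u))) = u"
    using \<open>0 < t\<close> assms(2)
    by (simp only: plane_offset_gauge_unpolar t_def[symmetric] sgn_scaleR sgn_pos) (simp add: sgn_div_norm)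
  moreover have "gauge_unpolar g c ((r, z), u) $ 3 = z"
    by (simp add: gauge_unpolar_def)
  ultimately show ?thesis
    by (simp add: gauge_polar_def)
qed

lemma gauge_unpolar_polar:
  assumes "0 < gauge_at g 1 2 c p"
  shows "gauge_unpolar g c (gauge_polar g c p) = p"
proof -
  define n where "n = norm (plane_offset c p)"
  define u where "u = sgn (plane_offset c p)"
  have n: "0 < n"
    using plane_offset_nonzero[OF assms] by (simp add: n_def)
  have u: "u = (1 / n) *\<^sub>R plane_offset c p"
    by (simp add: u_def n_def sgn_div_norm divide_inverse_commute)
  have "g (u$1) (u$2) = (1 / n) * gauge_at g 1 2 c p"
    unfolding u vector_scaleR_component real_scaleR_def gauge_at_plane_offset
    using n by (intro plane_gauge_homogeneous[OF g]) simp
  then have "gauge_at g 1 2 c p / g (u$1) (u$2) = n"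
    using n assms by simp
  then have "gauge_unpolar g c (gauge_polar g c p) = vector [c$1 + n * u$1, c$2 + n * u$2, p$3]"
    unfolding gauge_polar_def u_def[symmetric] gauge_unpolar_eq by simp
  also have "\<dots> = p"
    using n by (simp add: u vec_eq_iff forall_3 plane_offset_def)
  finally show ?thesis .
qed

lemma continuous_on_gauge_polar: "continuous_on {p. 0 < gauge_at g 1 2 c p} (gauge_polar g c)"
proof -
  have "continuous_on S (plane_offset c)" for S
    unfolding plane_offset_def vector_2_eq_axis by (intro continuous_intros)
  then show ?thesis
    unfolding gauge_polar_def using plane_offset_nonzero
    by (intro continuous_on_Pair continuous_on_sgn continuous_on_gauge_at[OF g] continuous_on_component
        continuous_on_id) auto
qed

lemma continuous_on_gauge_unpolar: "continuous_on (UNIV \<times> sphere 0 1) (gauge_unpolar g c)"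
proof -
  have "g (snd x $ 1) (snd x $ 2) \<noteq> 0" if "x \<in> UNIV \<times> sphere 0 1" for x :: "(real \<times> real) \<times> (real^2)"
    using gauge_sphere_pos[of "snd x"] that by auto
  then show ?thesis
    unfolding gauge_unpolar_def Let_def vector_3_eq_axis
    by (intro continuous_intros continuous_on_plane_gauge[OF g]) auto
qed

end

lemma homeomorphic_gauge_cylinder:
  fixes c :: "real^3"
  assumes g: "plane_gauge g" and I: "I \<subseteq> {0<..}"
  shows "{p. gauge_at g 1 2 c p \<in> I \<and> p$3 \<in> J} homeomorphic (I \<times> J) \<times> sphere (0::real^2) 1"
  unfolding homeomorphic_def
proof (intro exI homeomorphismI)
  let ?S = "{p. gauge_at g 1 2 c p \<in> I \<and> p$3 \<in> J}" and ?T = "(I \<times> J) \<times> sphere (0::real^2) 1"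
  show "continuous_on ?S (gauge_polar g c)"
    by (rule continuous_on_subset[OF continuous_on_gauge_polar[OF g]]) (use I in auto)
  show "continuous_on ?T (gauge_unpolar g c)"
    by (rule continuous_on_subset[OF continuous_on_gauge_unpolar[OF g]]) auto
  show "gauge_polar g c ` ?S \<subseteq> ?T"
    using I plane_offset_nonzero[OF g] by (auto simp: gauge_polar_def norm_sgn)
  show "gauge_unpolar g c (gauge_polar g c p) = p" if "p \<in> ?S" for p
    using that I by (intro gauge_unpolar_polar[OF g]) auto
  show "gauge_polar g c (gauge_unpolar g c x) = x" if "x \<in> ?T" for x
    using that I by (auto intro!: gauge_polar_unpolar[OF g])
  show "gauge_unpolar g c ` ?T \<subseteq> ?S"
  proof
    fix p
    assume "p \<in> gauge_unpolar g c ` ?T"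
    then obtain x where "x \<in> ?T" "p = gauge_unpolar g c x"
      by blast
    then show "p \<in> ?S"
      using gauge_polar_unpolar[OF g] I by (auto simp: gauge_polar_def)
  qed
qed

lemma not_in_interior_by_path:
  fixes \<gamma> :: "real \<Rightarrow> 'a::topological_space"
  assumes "(\<gamma> \<longlongrightarrow> p) (at_right 0)" and "\<And>t. 0 < t \<Longrightarrow> t < 1 \<Longrightarrow> \<gamma> t \<notin> S"
  shows "p \<notin> interior S"
proof
  assume "p \<in> interior S"
  then have "eventually (\<lambda>t. \<gamma> t \<in> interior S) (at_right 0)"
    using topological_tendstoD[OF assms(1) open_interior] by blast
  moreover have "eventually (\<lambda>t. t \<in> {0<..<1}) (at_right (0::real))"
    by (rule eventually_at_right_real) simp
  ultimately have "eventually (\<lambda>t. False) (at_right (0::real))"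
    by eventually_elim (use assms(2) interior_subset in auto)
  then show False
    by simp
qed

definition plane_scale :: "'n \<Rightarrow> 'n \<Rightarrow> real^'n \<Rightarrow> real \<Rightarrow> real^'n \<Rightarrow> real^'n" where
  "plane_scale i j c s p = (\<chi> k. if k = i \<or> k = j then c$k + s * (p$k - c$k) else p$k)"

lemma gauge_at_plane_scale:
  "plane_gauge g \<Longrightarrow> 0 < s \<Longrightarrow> gauge_at g i j c (plane_scale i j c s p) = s * gauge_at g i j c p"
  by (simp add: plane_scale_def gauge_at_def plane_gauge_homogeneous)

lemma tendsto_plane_scale: "((\<lambda>t. plane_scale i j c (1 + \<sigma> * t) p) \<longlongrightarrow> p) (at_right 0)"
proof -
  have "((\<lambda>t. plane_scale i j c (1 + \<sigma> * t) p) \<longlongrightarrow> plane_scale i j c (1 + \<sigma> * 0) p) (at_right 0)"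
    unfolding plane_scale_def
  proof (rule tendsto_vec_lambda)
    fix k
    show "((\<lambda>t. if k = i \<or> k = j then c$k + (1 + \<sigma> * t) * (p$k - c$k) else p$k) \<longlongrightarrow>
            (if k = i \<or> k = j then c$k + (1 + \<sigma> * 0) * (p$k - c$k) else p$k)) (at_right 0)"
      by (cases "k = i \<or> k = j") (auto intro!: tendsto_eq_intros)
  qed
  moreover have "plane_scale i j c 1 p = p"
    by (simp add: plane_scale_def vec_eq_iff)
  ultimately show ?thesis
    by simp
qed

lemma interior_gauge_at_le:
  assumes g: "plane_gauge g" and "0 < b"
  shows "interior {p. gauge_at g i j c p \<le> b} = {p. gauge_at g i j c p < b}"
proof
  have "open {p. gauge_at g i j c p < b}"
    by (rule open_Collect_less[OF continuous_on_gauge_at[OF g] continuous_on_const])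
  then show "{p. gauge_at g i j c p < b} \<subseteq> interior {p. gauge_at g i j c p \<le> b}"
    by (intro interior_maximal) auto
  show "interior {p. gauge_at g i j c p \<le> b} \<subseteq> {p. gauge_at g i j c p < b}"
  proof
    fix p
    assume p: "p \<in> interior {p. gauge_at g i j c p \<le> b}"
    have "gauge_at g i j c p \<noteq> b"
    proof
      assume "gauge_at g i j c p = b"
      then have "plane_scale i j c (1 + 1 * t) p \<notin> {p. gauge_at g i j c p \<le> b}" if "0 < t" for t
        using that \<open>0 < b\<close> by (simp add: gauge_at_plane_scale[OF g])
      then show False
        using not_in_interior_by_path[OF tendsto_plane_scale] p by blast
    qed
    then show "p \<in> {p. gauge_at g i j c p < b}"
      using p interior_subset by fastforce
  qed
qed

lemma interior_gauge_at_ge: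
  assumes g: "plane_gauge g" and "0 < a"
  shows "interior {p. a \<le> gauge_at g i j c p} = {p. a < gauge_at g i j c p}"
proof
  have "open {p. a < gauge_at g i j c p}"
    by (rule open_Collect_less[OF continuous_on_const continuous_on_gauge_at[OF g]])
  then show "{p. a < gauge_at g i j c p} \<subseteq> interior {p. a \<le> gauge_at g i j c p}"
    by (intro interior_maximal) auto
  show "interior {p. a \<le> gauge_at g i j c p} \<subseteq> {p. a < gauge_at g i j c p}"
  proof
    fix p
    assume p: "p \<in> interior {p. a \<le> gauge_at g i j c p}"
    have "gauge_at g i j c p \<noteq> a"
    proof
      assume "gauge_at g i j c p = a"
      then have "plane_scale i j c (1 + (-1) * t) p \<notin> {p. a \<le> gauge_at g i j c p}"
        if "0 < t" "t < 1" for t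
        using that \<open>0 < a\<close> by (simp add: gauge_at_plane_scale[OF g])
      then show False
        using not_in_interior_by_path[OF tendsto_plane_scale] p by blast
    qed
    then show "p \<in> {p. a < gauge_at g i j c p}"
      using p interior_subset by fastforce
  qed
qed

lemma interior_gauge_cylinder:
  fixes c :: "real^3"
  assumes g: "plane_gauge g" and "0 < a" "a \<le> b"
  shows "interior {p. gauge_at g 1 2 c p \<in> {a..b} \<and> p$3 \<in> {d..e}} =
           {p. gauge_at g 1 2 c p \<in> {a<..<b} \<and> p$3 \<in> {d<..<e}}"
proof -
  have "{p. gauge_at g 1 2 c p \<in> {a..b} \<and> p$3 \<in> {d..e}} =
      {p. a \<le> gauge_at g 1 2 c p} \<inter> {p. gauge_at g 1 2 c p \<le> b} \<inter> {p. d \<le> p$3} \<inter> {p. p$3 \<le> e}"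
    by auto
  then show ?thesis
    using assms by (auto simp: interior_gauge_at_le interior_gauge_at_ge)
qed

lemma homeomorphic_image_UNIV:
  assumes "homeomorphism UNIV UNIV f g" "f ` S = T"
  shows "S homeomorphic T"
  unfolding homeomorphic_def using homeomorphism_of_subsets[OF assms(1) _ _ assms(2)] by blast

lemma homeomorphic_Times:
  assumes "S homeomorphic S'" "T homeomorphic T'"
  shows "S \<times> T homeomorphic S' \<times> T'"
proof -
  obtain f f' where f: "homeomorphism S S' f f'"
    using assms(1) unfolding homeomorphic_def by blast
  obtain g g' where g: "homeomorphism T T' g g'"
    using assms(2) unfolding homeomorphic_def by blast
  have "homeomorphism (S \<times> T) (S' \<times> T') (\<lambda>(x, y). (f x, g y)) (\<lambda>(x, y). (f' x, g' y))"
  proof (rule homeomorphismI)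
    have "continuous_on S f" "continuous_on S' f'" "continuous_on T g" "continuous_on T' g'"
      using f g by (auto simp: homeomorphism_def)
    then show "continuous_on (S \<times> T) (\<lambda>(x, y). (f x, g y))"
      "continuous_on (S' \<times> T') (\<lambda>(x, y). (f' x, g' y))"
      unfolding case_prod_beta
      by (auto intro!: continuous_on_Pair continuous_on_compose2[OF _ continuous_on_fst]
          continuous_on_compose2[OF _ continuous_on_snd] continuous_on_id)
  qed (use f g in \<open>auto simp: homeomorphism_def\<close>)
  then show ?thesis
    unfolding homeomorphic_def by blast
qed

lemma rectangle_homeomorphic_cball:
  fixes a b c d :: real
  assumes "a < b" "c < d"
  shows "{a..b} \<times> {c..d} homeomorphic cball (0::real^2) 1"
proof (rule homeomorphic_convex_compact_sets)
  have "interior ({a..b} \<times> {c..d}) \<noteq> {}"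
    using assms by (simp add: interior_Times)
  then show "aff_dim ({a..b} \<times> {c..d}) = aff_dim (cball (0::real^2) 1)"
    by (simp add: aff_dim_nonempty_interior)
qed (auto intro: convex_Times compact_Times)

section \<open>Isometries and boxes\<close>

definition surj_isometry :: "('a::metric_space \<Rightarrow> 'a) \<Rightarrow> bool" where
  "surj_isometry f \<longleftrightarrow> surj f \<and> (\<forall>x y. dist (f x) (f y) = dist x y)"

lemma congruent_image: "surj_isometry f \<Longrightarrow> congruent A (f ` A)"
  unfolding congruent_def surj_isometry_def by blast

lemma congruent_refl: "congruent S S"
  using congruent_image[of id S] by (simp add: surj_isometry_def)

lemma surj_isometry_comp: "surj_isometry f \<Longrightarrow> surj_isometry g \<Longrightarrow> surj_isometry (f \<circ> g)"
  unfolding surj_isometry_def using comp_surj[of g f] by simp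

lemma surj_isometry_inj: "surj_isometry f \<Longrightarrow> inj f"
  unfolding surj_isometry_def by (metis dist_eq_0_iff injI)

lemma surj_isometry_inv:
  assumes "surj_isometry f"
  shows "surj_isometry (inv f)"
proof -
  have "surj f" "\<And>x y. dist (f x) (f y) = dist x y"
    using assms by (simp_all add: surj_isometry_def)
  moreover have "bij f"
    using surj_isometry_inj[OF assms] \<open>surj f\<close> by (simp add: bij_def)
  ultimately show ?thesis
    unfolding surj_isometry_def
    by (metis bij_imp_bij_inv bij_is_surj surj_f_inv_f)
qed

lemma congruent_sym:
  assumes "congruent A B"
  shows "congruent B A"
proof -
  obtain f where f: "surj_isometry f" and B: "f ` A = B"
    using assms unfolding congruent_def surj_isometry_def by blast
  then have "inv f ` B = A"
    using surj_isometry_inj[OF f] by (auto simp: image_inv_f_f)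
  then show ?thesis
    using congruent_image[OF surj_isometry_inv[OF f], of B] by simp
qed

lemma surj_isometry_continuous: "surj_isometry f \<Longrightarrow> continuous (at x) f"
  using lipschitz_on_continuous_within[of 1 UNIV f x]
  by (simp add: surj_isometry_def lipschitz_on_def)

lemma interior_image_disjoint:
  assumes "surj_isometry f" and "interior A \<inter> interior B = {}"
  shows "interior (f ` A) \<inter> interior (f ` B) = {}"
proof -
  have "interior (f ` A) \<inter> interior (f ` B) \<subseteq> f ` interior A \<inter> f ` interior B"
    using interior_image_subset[OF surj_isometry_inj[OF assms(1)] surj_isometry_continuous[OF assms(1)]]
    by blast
  also have "\<dots> = f ` (interior A \<inter> interior B)"
    using surj_isometry_inj[OF assms(1)] by (simp add: image_Int)
  finally show ?thesis
    using assms(2) by simp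
qed

definition perm_shift :: "('n \<Rightarrow> 'n) \<Rightarrow> real^'n \<Rightarrow> real^'n \<Rightarrow> real^'n" where
  "perm_shift \<sigma> t x = t + (\<chi> i. x $ \<sigma> i)"

lemma dist_perm_shift:
  fixes \<sigma> :: "'n::finite \<Rightarrow> 'n"
  assumes "bij \<sigma>"
  shows "dist (perm_shift \<sigma> t x) (perm_shift \<sigma> t y) = dist x y"
proof -
  have "(\<Sum>i\<in>UNIV. (norm ((x - y) $ \<sigma> i))\<^sup>2) = (\<Sum>i\<in>UNIV. (norm ((x - y) $ i))\<^sup>2)"
    using sum.reindex_bij_betw[OF assms, of "\<lambda>i. (norm ((x - y) $ i))\<^sup>2"] by simp
  then show ?thesis
    by (simp add: perm_shift_def dist_norm norm_vec_def L2_set_def)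
qed

lemma surj_perm_shift:
  fixes \<sigma> :: "'n::finite \<Rightarrow> 'n"
  assumes "bij \<sigma>"
  shows "surj (perm_shift \<sigma> t)"
proof (rule surjI)
  show "perm_shift \<sigma> t (\<chi> i. (y - t) $ inv \<sigma> i) = y" for y
    using assms by (simp add: perm_shift_def vec_eq_iff bij_is_inj)
qed

lemma perm_shift_cbox:
  fixes \<sigma> :: "'n::finite \<Rightarrow> 'n"
  assumes "bij \<sigma>"
  shows "perm_shift \<sigma> t ` cbox a b = cbox (perm_shift \<sigma> t a) (perm_shift \<sigma> t b)"
proof -
  have "(\<lambda>x. \<chi> i. x $ \<sigma> i) ` cbox a b = cbox (\<chi> i. a $ \<sigma> i) (\<chi> i. b $ \<sigma> i)"
  proof (rule image_eq_if_inverse)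
    show "(\<chi> i. (\<chi> i. y $ inv \<sigma> i) $ \<sigma> i) = y" for y :: "real^'n"
      using assms by (simp add: vec_eq_iff bij_is_inj)
    have all_\<sigma>: "(\<forall>i. P (\<sigma> i)) \<longleftrightarrow> (\<forall>j. P j)" for P
      using assms by (metis bij_is_surj surjD)
    show "(\<chi> i. x $ \<sigma> i) \<in> cbox (\<chi> i. a $ \<sigma> i) (\<chi> i. b $ \<sigma> i) \<longleftrightarrow> x \<in> cbox a b" for x
      unfolding mem_box_cart vec_lambda_beta using all_\<sigma>[of "\<lambda>j. a$j \<le> x$j \<and> x$j \<le> b$j"] by simp
  qed
  then have "(\<lambda>x. t + x) ` (\<lambda>x. \<chi> i. x $ \<sigma> i) ` cbox a b = cbox (t + (\<chi> i. a $ \<sigma> i)) (t + (\<chi> i. b $ \<sigma> i))"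
    by (simp add: cbox_translation)
  then show ?thesis
    by (simp add: perm_shift_def image_image)
qed

lemma surj_isometry_perm_shift: "bij \<sigma> \<Longrightarrow> surj_isometry (perm_shift \<sigma> t)"
  by (simp add: surj_isometry_def dist_perm_shift surj_perm_shift)

definition half_turn :: "real^3 \<Rightarrow> real^3" where
  "half_turn x = vector [x$1, 4 - x$2, 2 - x$3]"

lemma half_turn_half_turn [simp]: "half_turn (half_turn x) = x"
  by (simp add: half_turn_def vec_eq_iff forall_3)

lemma surj_isometry_half_turn: "surj_isometry half_turn"
  unfolding surj_isometry_def
proof
  show "surj half_turn"
    by (metis half_turn_half_turn surjI)
  show "\<forall>x y. dist (half_turn x) (half_turn y) = dist x y"
    by (simp add: half_turn_def dist_norm norm_vec_def L2_set_def sum_3 power2_commute)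
qed

lemma half_turn_motion_half_turn: "half_turn_motion half_turn"
proof -
  define R :: "real^3^3" where "R = vector [vector [1, 0, 0], vector [0, -1, 0], vector [0, 0, -1]]"
  have "orthogonal_matrix R" "det R = 1" "R ** R = mat 1" "R \<noteq> mat 1"
    "\<And>x. half_turn x = R *v x + vector [0, 4, 2]"
    by (auto simp: R_def orthogonal_matrix_def transpose_def matrix_matrix_mult_def mat_def det_3
        matrix_vector_mult_def half_turn_def vec_eq_iff forall_3 sum_3)
  then show ?thesis
    unfolding half_turn_motion_def by blast
qed

lemma zero_eq_vector_3: "(0::real^3) = vector [0, 0, 0]"
  by (simp add: vec_eq_iff forall_3)

definition box3 :: "real \<Rightarrow> real \<Rightarrow> real \<Rightarrow> real \<Rightarrow> real \<Rightarrow> real \<Rightarrow> (real^3) set" where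
  "box3 a1 a2 a3 b1 b2 b3 = cbox (vector [a1, a2, a3]) (vector [b1, b2, b3])"

lemma mem_box3:
  "p \<in> box3 a1 a2 a3 b1 b2 b3 \<longleftrightarrow> a1 \<le> p$1 \<and> p$1 \<le> b1 \<and> a2 \<le> p$2 \<and> p$2 \<le> b2 \<and> a3 \<le> p$3 \<and> p$3 \<le> b3"
  by (auto simp: box3_def mem_box_cart forall_3)

lemma interior_box3:
  "interior (box3 a1 a2 a3 b1 b2 b3) = {p. a1 < p$1 \<and> p$1 < b1 \<and> a2 < p$2 \<and> p$2 < b2 \<and> a3 < p$3 \<and> p$3 < b3}"
  by (auto simp: box3_def interior_cbox mem_box_cart forall_3)

lemma box3_is_cbox: "\<exists>a b. box3 a1 a2 a3 b1 b2 b3 = cbox a b"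
  by (auto simp: box3_def)

lemma interior_Union_boxes_disjoint:
  fixes F G :: "'a::euclidean_space set set"
  assumes "finite F" "finite G" "\<And>S. S \<in> F \<union> G \<Longrightarrow> \<exists>a b. S = cbox a b"
    and "\<And>S T. S \<in> F \<Longrightarrow> T \<in> G \<Longrightarrow> interior S \<inter> interior T = {}"
  shows "interior (\<Union>F) \<inter> interior (\<Union>G) = {}"
proof (rule Int_interior_Union_intervals[OF assms(2) open_interior])
  fix T
  assume "T \<in> G"
  have "interior T \<inter> interior (\<Union>F) = {}"
    by (rule Int_interior_Union_intervals[OF assms(1) open_interior]) (use assms \<open>T \<in> G\<close> in blast)+
  then show "interior (\<Union>F) \<inter> interior T = {}"
    by blast
qed (use assms in blast)

lemma perm_shift_box3:
  "perm_shift (Transposition.transpose 1 2) (vector [t1, t2, t3]) ` box3 a1 a2 a3 b1 b2 b3 =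
     box3 (t1 + a2) (t2 + a1) (t3 + a3) (t1 + b2) (t2 + b1) (t3 + b3)"
  "perm_shift (Transposition.transpose 2 3) (vector [t1, t2, t3]) ` box3 a1 a2 a3 b1 b2 b3 =
     box3 (t1 + a1) (t2 + a3) (t3 + a2) (t1 + b1) (t2 + b3) (t3 + b2)"
  unfolding box3_def perm_shift_cbox[OF bij_transpose]
  by (rule arg_cong2[where f = cbox]; simp add: perm_shift_def vec_eq_iff forall_3)+

lemma half_turn_box3:
  "half_turn ` box3 a1 a2 a3 b1 b2 b3 = box3 a1 (4 - b2) (2 - b3) b1 (4 - a2) (2 - a3)"
proof (rule image_eq_if_inverse[where g = half_turn])
  show "half_turn p \<in> box3 a1 (4 - b2) (2 - b3) b1 (4 - a2) (2 - a3) \<longleftrightarrow> p \<in> box3 a1 a2 a3 b1 b2 b3" for p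
    by (auto simp: mem_box3 half_turn_def)
qed simp

lemma scaleR_box3:
  "(\<lambda>x. c *\<^sub>R x) ` box3 a1 a2 a3 b1 b2 b3 = box3 (c * a1) (c * a2) (c * a3) (c * b1) (c * b2) (c * b3)"
  if "0 < c"
proof (rule image_eq_if_inverse[where g = "\<lambda>x. (1 / c) *\<^sub>R x"])
  show "c *\<^sub>R p \<in> box3 (c * a1) (c * a2) (c * a3) (c * b1) (c * b2) (c * b3) \<longleftrightarrow> p \<in> box3 a1 a2 a3 b1 b2 b3"
    for p
    using that by (simp add: mem_box3)
qed (use that in simp)

section \<open>The tile and its half-turn\<close>

definition torus_tile :: "(real^3) set" where
  "torus_tile = box3 0 0 0 2 4 1 \<union> box3 2 0 0 6 1 2 \<union> box3 2 2 0 6 3 2 \<union> box3 6 0 0 8 4 1"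

definition brick_motion :: "nat \<Rightarrow> real^3 \<Rightarrow> real^3" where
  "brick_motion k =
     [perm_shift (Transposition.transpose 1 2) (vector [0, 0, 0]),
      perm_shift (Transposition.transpose 2 3) (vector [2, 0, 0]),
      perm_shift (Transposition.transpose 2 3) (vector [2, 2, 0]),
      perm_shift (Transposition.transpose 1 2) (vector [6, 0, 0])] ! k"

definition brick :: "nat \<Rightarrow> (real^3) set" where
  "brick k = brick_motion k ` box3 0 0 0 4 2 1"

lemma brick_eq:
  "brick 0 = box3 0 0 0 2 4 1" "brick (Suc 0) = box3 2 0 0 6 1 2"
  "brick 2 = box3 2 2 0 6 3 2" "brick 3 = box3 6 0 0 8 4 1"
  by (simp_all add: brick_def brick_motion_def perm_shift_box3)

lemma torus_tile_eq_Union_brick: "torus_tile = (\<Union>i<4. brick i)"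
proof -
  have "{..<4::nat} = {0, 1, 2, 3}"
    by auto
  then show ?thesis
    by (simp add: torus_tile_def brick_eq Un_ac)
qed

lemma brick_congruent:
  assumes "i < 4"
  shows "congruent (brick i) (cbox 0 (vector [4, 2, 1]))"
proof -
  have "surj_isometry (brick_motion i)"
    using assms by (auto simp: brick_motion_def less_Suc_eq numeral_eq_Suc surj_isometry_perm_shift)
  then have "congruent (box3 0 0 0 4 2 1) (brick i)"
    unfolding brick_def by (rule congruent_image)
  moreover have "cbox 0 (vector [4, 2, 1]) = box3 0 0 0 4 2 1"
    by (simp add: box3_def flip: zero_eq_vector_3)
  ultimately show ?thesis
    by (simp add: congruent_sym)
qed

lemma interior_brick_disjoint:
  assumes "i < 4" "j < 4" "i \<noteq> j"
  shows "interior (brick i) \<inter> interior (brick j) = {}"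
proof -
  have "i = 0 \<or> i = 1 \<or> i = 2 \<or> i = 3" "j = 0 \<or> j = 1 \<or> j = 2 \<or> j = 3"
    using assms by arith+
  then show ?thesis
    using assms(3) by (auto simp: brick_eq interior_box3)
qed

lemma half_turn_torus_tile:
  "half_turn ` torus_tile = box3 0 0 1 2 4 2 \<union> box3 2 3 0 6 4 2 \<union> box3 2 1 0 6 2 2 \<union> box3 6 0 1 8 4 2"
  by (simp add: torus_tile_def image_Un half_turn_box3)

lemma torus_tile_Un_half_turn: "torus_tile \<union> half_turn ` torus_tile = box3 0 0 0 8 4 2"
proof
  show "torus_tile \<union> half_turn ` torus_tile \<subseteq> box3 0 0 0 8 4 2"
    unfolding half_turn_torus_tile by (auto simp: torus_tile_def mem_box3)
  show "box3 0 0 0 8 4 2 \<subseteq> torus_tile \<union> half_turn ` torus_tile"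
  proof
    fix p
    assume "p \<in> box3 0 0 0 8 4 2"
    then have p: "0 \<le> p$1" "p$1 \<le> 8" "0 \<le> p$2" "p$2 \<le> 4" "0 \<le> p$3" "p$3 \<le> 2"
      by (simp_all add: mem_box3)
    consider "p$1 \<le> 2 \<or> 6 \<le> p$1" "p$3 \<le> 1" | "p$1 \<le> 2 \<or> 6 \<le> p$1" "1 \<le> p$3"
      | "2 \<le> p$1" "p$1 \<le> 6" "p$2 \<le> 1" | "2 \<le> p$1" "p$1 \<le> 6" "1 \<le> p$2" "p$2 \<le> 2"
      | "2 \<le> p$1" "p$1 \<le> 6" "2 \<le> p$2" "p$2 \<le> 3" | "2 \<le> p$1" "p$1 \<le> 6" "3 \<le> p$2"
      by linarith
    then show "p \<in> torus_tile \<union> half_turn ` torus_tile"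
      unfolding half_turn_torus_tile by cases (use p in \<open>auto simp: torus_tile_def mem_box3\<close>)
  qed
qed

lemma interior_torus_tile_half_turn: "interior torus_tile \<inter> interior (half_turn ` torus_tile) = {}"
proof -
  have "interior (\<Union>{box3 0 0 0 2 4 1, box3 2 0 0 6 1 2, box3 2 2 0 6 3 2, box3 6 0 0 8 4 1}) \<inter>
        interior (\<Union>{box3 0 0 1 2 4 2, box3 2 3 0 6 4 2, box3 2 1 0 6 2 2, box3 6 0 1 8 4 2}) = {}"
    by (rule interior_Union_boxes_disjoint) (auto simp: box3_is_cbox interior_box3)
  then show ?thesis
    unfolding half_turn_torus_tile by (simp add: torus_tile_def Un_assoc)
qed

section \<open>The tile is a solid torus\<close>

definition flat_tile :: "(real^3) set" where
  "flat_tile = box3 0 0 0 2 4 1 \<union> box3 2 0 0 6 1 1 \<union> box3 2 2 0 6 3 1 \<union> box3 6 0 0 8 4 1"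

definition left_trimmed_tile :: "(real^3) set" where
  "left_trimmed_tile = box3 0 0 0 2 3 1 \<union> box3 2 0 0 6 1 1 \<union> box3 2 2 0 6 3 1 \<union> box3 6 0 0 8 4 1"

definition rect_frame :: "(real^3) set" where
  "rect_frame = box3 0 0 0 2 3 1 \<union> box3 2 0 0 6 1 1 \<union> box3 2 2 0 6 3 1 \<union> box3 6 0 0 8 3 1"

lemma radial_rescale_torus_tile:
  "radial_rescale (rect_gauge 2 (1/2) (3/2)) (rect_gauge 2 (1/2) (1/2)) 1 3 (vector [4, 0, 1/2]) ` torus_tile
     = flat_tile"
  by (rule radial_rescale_image[where k = 2 and Z = "{0..1} \<union> {2..3}"
        and R = "box3 0 0 0 2 4 1 \<union> box3 6 0 0 8 4 1"])
     (auto simp: plane_gauge_rect_gauge torus_tile_def flat_tile_def mem_box3 gauge_at_def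
        rect_gauge_le_iff rect_gauge_eq_iff)

lemma radial_rescale_flat_tile:
  "radial_rescale (rect_gauge 1 (1/2) (3/2)) (rect_gauge 1 (1/2) (1/2)) 1 2 (vector [1, 5/2, 0]) ` flat_tile
     = left_trimmed_tile"
  by (rule radial_rescale_image[where k = 3 and Z = "{0..1}"
        and R = "box3 0 0 0 2 2 1 \<union> box3 2 0 0 6 1 1 \<union> box3 2 2 0 6 3 1 \<union> box3 6 0 0 8 4 1"])
     (auto simp: plane_gauge_rect_gauge flat_tile_def left_trimmed_tile_def mem_box3 gauge_at_def
        rect_gauge_le_iff rect_gauge_eq_iff)

lemma radial_rescale_left_trimmed_tile:
  "radial_rescale (rect_gauge 1 (1/2) (3/2)) (rect_gauge 1 (1/2) (1/2)) 1 2 (vector [7, 5/2, 0]) ` left_trimmed_tile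
     = rect_frame"
  by (rule radial_rescale_image[where k = 3 and Z = "{0..1}"
        and R = "box3 0 0 0 2 3 1 \<union> box3 2 0 0 6 1 1 \<union> box3 2 2 0 6 3 1 \<union> box3 6 0 0 8 2 1"])
     (auto simp: plane_gauge_rect_gauge left_trimmed_tile_def rect_frame_def mem_box3 gauge_at_def
        rect_gauge_le_iff rect_gauge_eq_iff)

(* Piecewise linear, mapping [0,1], [1,2], [2,3] onto [1/2,1], [1,2], [2,5/2]. *)
definition squeeze :: "real \<Rightarrow> real" where
  "squeeze y = max ((y + 1) / 2) (min y ((y + 2) / 2))"

definition unsqueeze :: "real \<Rightarrow> real" where
  "unsqueeze y = min (2 * y - 1) (max y (2 * y - 2))"

lemma homeomorphism_squeeze: "homeomorphism UNIV UNIV squeeze unsqueeze"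
proof (rule homeomorphismI)
  show "continuous_on UNIV squeeze" "continuous_on UNIV unsqueeze"
    unfolding squeeze_def unsqueeze_def by (auto intro!: continuous_intros)
qed (auto simp: squeeze_def unsqueeze_def max_def min_def field_simps)

lemma squeeze_bounds:
  "1/2 \<le> squeeze y \<longleftrightarrow> 0 \<le> y" "squeeze y \<le> 5/2 \<longleftrightarrow> y \<le> 3"
  "squeeze y \<le> 1 \<longleftrightarrow> y \<le> 1" "2 \<le> squeeze y \<longleftrightarrow> 2 \<le> y"
  by (auto simp: squeeze_def max_def min_def)

definition shell :: "(real^3) set" where
  "shell = {p. gauge_at (rect_gauge 2 (1/2) (1/2)) 1 2 (vector [4, 3/2, 0]) p \<in> {1..2} \<and> p$3 \<in> {0..1}}"

lemma mem_rect_frame: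
  "p \<in> rect_frame \<longleftrightarrow> 0 \<le> p$1 \<and> p$1 \<le> 8 \<and> 0 \<le> p$2 \<and> p$2 \<le> 3 \<and> 0 \<le> p$3 \<and> p$3 \<le> 1 \<and>
     (p$1 \<le> 2 \<or> 6 \<le> p$1 \<or> p$2 \<le> 1 \<or> 2 \<le> p$2)"
  by (auto simp: rect_frame_def mem_box3)

lemma mem_shell:
  "p \<in> shell \<longleftrightarrow> 0 \<le> p$1 \<and> p$1 \<le> 8 \<and> 1/2 \<le> p$2 \<and> p$2 \<le> 5/2 \<and> 0 \<le> p$3 \<and> p$3 \<le> 1 \<and>
     (p$1 \<le> 2 \<or> 6 \<le> p$1 \<or> p$2 \<le> 1 \<or> 2 \<le> p$2)"
  unfolding shell_def gauge_at_def atLeastAtMost_iff not_less[of _ 1, symmetric]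
  by (auto simp: rect_gauge_le_iff rect_gauge_less_iff)

lemma map_coord_squeeze_rect_frame: "map_coord 2 squeeze ` rect_frame = shell"
proof (rule image_eq_if_inverse)
  show "map_coord 2 squeeze (map_coord 2 unsqueeze q) = q" for q :: "real^3"
    using homeomorphism_squeeze by (simp add: homeomorphism_def map_coord_def vec_eq_iff)
  show "map_coord 2 squeeze p \<in> shell \<longleftrightarrow> p \<in> rect_frame" for p
    unfolding mem_shell mem_rect_frame map_coord_nth squeeze_bounds by simp
qed

lemma torus_tile_homeomorphic_shell: "torus_tile homeomorphic shell"
proof -
  have "torus_tile homeomorphic flat_tile"
    by (rule homeomorphic_image_UNIV[OF homeomorphism_radial_rescale radial_rescale_torus_tile])
      (simp_all add: plane_gauge_rect_gauge)
  also have "\<dots> homeomorphic left_trimmed_tile"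
    by (rule homeomorphic_image_UNIV[OF homeomorphism_radial_rescale radial_rescale_flat_tile])
      (simp_all add: plane_gauge_rect_gauge)
  also have "\<dots> homeomorphic rect_frame"
    by (rule homeomorphic_image_UNIV[OF homeomorphism_radial_rescale radial_rescale_left_trimmed_tile])
      (simp_all add: plane_gauge_rect_gauge)
  also have "\<dots> homeomorphic shell"
    by (rule homeomorphic_image_UNIV[OF homeomorphism_map_coord[OF homeomorphism_squeeze]
          map_coord_squeeze_rect_frame])
  finally show ?thesis .
qed

lemma torus_tile_homeomorphic_solid_torus: "torus_tile homeomorphic solid_torus"
proof -
  note torus_tile_homeomorphic_shell
  also have "shell homeomorphic ({1..2::real} \<times> {0..1::real}) \<times> sphere (0::real^2) 1"
    unfolding shell_def by (intro homeomorphic_gauge_cylinder plane_gauge_rect_gauge) auto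
  also have "\<dots> homeomorphic solid_torus"
    unfolding solid_torus_def by (intro homeomorphic_Times rectangle_homeomorphic_cball homeomorphic_refl) auto
  finally show ?thesis .
qed

lemma interior_torus_tile_homeomorphic_open_solid_torus: "interior torus_tile homeomorphic open_solid_torus"
proof -
  have "interior torus_tile homeomorphic interior shell"
    by (rule homeomorphic_interiors_same_dimension[OF torus_tile_homeomorphic_shell]) simp
  also have "interior shell =
      {p. gauge_at (rect_gauge 2 (1/2) (1/2)) 1 2 (vector [4, 3/2, 0]) p \<in> {1<..<2} \<and> p$3 \<in> {0<..<1}}"
    unfolding shell_def by (intro interior_gauge_cylinder plane_gauge_rect_gauge) auto
  also have "\<dots> homeomorphic ({1<..<2::real} \<times> {0<..<1::real}) \<times> sphere (0::real^2) 1"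
    by (intro homeomorphic_gauge_cylinder plane_gauge_rect_gauge) auto
  also have "\<dots> homeomorphic open_solid_torus"
  proof -
    have "interior ({1..2::real} \<times> {0..1::real}) homeomorphic interior (cball (0::real^2) 1)"
      by (intro homeomorphic_interiors_same_dimension rectangle_homeomorphic_cball) auto
    then show ?thesis
      unfolding open_solid_torus_def interior_Times interior_atLeastAtMost_real interior_cball
      by (intro homeomorphic_Times homeomorphic_refl)
  qed
  finally show ?thesis .
qed

lemma connected_interior_torus_tile: "connected (interior torus_tile)"
proof -
  have "connected open_solid_torus"
    unfolding open_solid_torus_def by (intro connected_Times connected_ball connected_sphere) simp
  then show ?thesis
    using homeomorphic_connectedness[OF interior_torus_tile_homeomorphic_open_solid_torus] by blast
qed

section \<open>Eight copies of the tile\<close>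

definition block_motion :: "nat \<Rightarrow> real^3 \<Rightarrow> real^3" where
  "block_motion k =
     [perm_shift (Transposition.transpose 1 2) (vector [0, 0, 0]),
      perm_shift (Transposition.transpose 2 3) (vector [4, 0, 0]),
      perm_shift (Transposition.transpose 2 3) (vector [4, 4, 0]),
      perm_shift (Transposition.transpose 1 2) (vector [12, 0, 0])] ! k"

lemma surj_isometry_block_motion: "k < 4 \<Longrightarrow> surj_isometry (block_motion k)"
  by (auto simp: block_motion_def less_Suc_eq numeral_eq_Suc surj_isometry_perm_shift)

definition block :: "nat \<Rightarrow> (real^3) set" where
  "block k = block_motion k ` box3 0 0 0 8 4 2"

lemma block_eq:
  "block 0 = box3 0 0 0 4 8 2" "block (Suc 0) = box3 4 0 0 12 2 4"
  "block 2 = box3 4 4 0 12 6 4" "block 3 = box3 12 0 0 16 8 2"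
  by (simp_all add: block_def block_motion_def perm_shift_box3)

lemma interior_block_disjoint:
  assumes "k < 4" "l < 4" "k \<noteq> l"
  shows "interior (block k) \<inter> interior (block l) = {}"
proof -
  have "k = 0 \<or> k = 1 \<or> k = 2 \<or> k = 3" "l = 0 \<or> l = 1 \<or> l = 2 \<or> l = 3"
    using assms by arith+
  then show ?thesis
    using assms(3) by (auto simp: block_eq interior_box3)
qed

definition tile :: "nat \<Rightarrow> (real^3) set" where
  "tile i = block_motion (i div 2) ` (if even i then torus_tile else half_turn ` torus_tile)"

lemma tile_congruent: "i < 8 \<Longrightarrow> congruent (tile i) torus_tile"
proof -
  assume "i < 8"
  then have motion: "surj_isometry (block_motion (i div 2))"
    by (intro surj_isometry_block_motion) simp
  have "congruent torus_tile (tile i)"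
  proof (cases "even i")
    case True
    then show ?thesis
      using congruent_image[OF motion] by (simp add: tile_def)
  next
    case False
    then show ?thesis
      using congruent_image[OF surj_isometry_comp[OF motion surj_isometry_half_turn]]
      by (simp add: tile_def image_comp)
  qed
  then show ?thesis
    by (rule congruent_sym)
qed

lemma tile_subset_block: "tile i \<subseteq> block (i div 2)"
  unfolding tile_def block_def torus_tile_Un_half_turn[symmetric] by auto

lemma interior_tile_disjoint:
  assumes "i < 8" "j < 8" "i \<noteq> j"
  shows "interior (tile i) \<inter> interior (tile j) = {}"
proof (cases "i div 2 = j div 2")
  case True
  define k where "k = i div 2"
  have "k < 4"
    using assms(1) by (simp add: k_def)
  have "interior (tile (2 * k)) \<inter> interior (tile (2 * k + 1)) = {}"
    using interior_image_disjoint[OF surj_isometry_block_motion[OF \<open>k < 4\<close>] interior_torus_tile_half_turn]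
    by (simp add: tile_def)
  moreover have "i = 2 * k \<and> j = 2 * k + 1 \<or> i = 2 * k + 1 \<and> j = 2 * k"
    using True assms(3) unfolding k_def by presburger
  ultimately show ?thesis
    by (auto simp: Int_commute)
next
  case False
  have "interior (tile i) \<inter> interior (tile j) \<subseteq> interior (block (i div 2)) \<inter> interior (block (j div 2))"
    using tile_subset_block by (intro Int_mono interior_mono)
  also have "\<dots> = {}"
    using assms False by (intro interior_block_disjoint) auto
  finally show ?thesis
    by blast
qed

lemma Union_tile: "(\<Union>i<8. tile i) = (\<lambda>x. 2 *\<^sub>R x) ` torus_tile"
proof -
  have "(\<Union>i<8. tile i) = block 0 \<union> block 1 \<union> block 2 \<union> block 3"
    unfolding block_def torus_tile_Un_half_turn[symmetric]
    by (auto simp: lessThan_nat_numeral tile_def image_Un)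
  also have "\<dots> = (\<lambda>x. 2 *\<^sub>R x) ` torus_tile"
    by (simp add: block_eq torus_tile_def image_Un scaleR_box3)
  finally show ?thesis .
qed

lemma rep_tile_torus_tile: "rep_tile 8 torus_tile"
  unfolding rep_tile_def
proof (intro conjI exI[of _ tile])
  show "closed torus_tile"
    unfolding torus_tile_def box3_def by (intro closed_Un closed_cbox)
  show "bounded torus_tile"
    by (simp add: torus_tile_def box3_def)
  have "vector [1, 1, 1/2] \<in> interior (box3 0 0 0 2 4 1)"
    by (simp add: interior_box3)
  moreover have "interior (box3 0 0 0 2 4 1) \<subseteq> interior torus_tile"
    by (rule interior_mono) (auto simp: torus_tile_def)
  ultimately show "interior torus_tile \<noteq> {}"
    by blast
  show "\<forall>i<8. congruent (tile i) torus_tile"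
    by (simp add: tile_congruent)
  show "\<forall>i<8. \<forall>j<8. i \<noteq> j \<longrightarrow> interior (tile i) \<inter> interior (tile j) = {}"
    by (simp add: interior_tile_disjoint)
  have "surj (\<lambda>x::real^3. (1/2) *\<^sub>R x)"
    by (rule surjI[of _ "\<lambda>x. 2 *\<^sub>R x"]) simp
  moreover have "dist ((1/2) *\<^sub>R x) ((1/2) *\<^sub>R y) = 1/2 * dist x y" for x y :: "real^3"
    by (simp add: dist_norm flip: scaleR_diff_right)
  moreover have "(\<lambda>x. (1/2) *\<^sub>R x) ` (\<Union>i<8. tile i) = torus_tile"
    by (simp add: Union_tile image_image)
  ultimately show "similar_sets (\<Union>i<8. tile i) torus_tile"
    unfolding similar_sets_def by (intro exI[of _ "\<lambda>x. (1/2) *\<^sub>R x"] exI[of _ "1/2"]) auto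
qed

theorem mainTheorem2:
  shows "\<exists>A :: (real^3) set.
     rep_tile 8 A \<and>
     A homeomorphic solid_torus \<and>
     connected (interior A) \<and> interior A homeomorphic open_solid_torus \<and>
     (\<exists>B :: nat \<Rightarrow> (real^3) set.
        (\<forall>i<4. congruent (B i) (cbox 0 (vector [4, 2, 1]))) \<and>
        (\<forall>i<4. \<forall>j<4. i \<noteq> j \<longrightarrow> interior (B i) \<inter> interior (B j) = {}) \<and>
        A = (\<Union>i<4. B i)) \<and>
     (\<exists>g. half_turn_motion g \<and>
        interior A \<inter> interior (g ` A) = {} \<and>
        congruent (A \<union> g ` A) (cbox 0 (vector [8, 4, 2]))) \<and>
     (\<exists>T :: nat \<Rightarrow> (real^3) set.
        (\<forall>i<8. congruent (T i) A) \<and>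
        (\<forall>i<8. \<forall>j<8. i \<noteq> j \<longrightarrow> interior (T i) \<inter> interior (T j) = {}) \<and>
        (\<Union>i<8. T i) = (\<lambda>x. 2 *\<^sub>R x) ` A)"
proof (intro exI[of _ torus_tile] conjI rep_tile_torus_tile torus_tile_homeomorphic_solid_torus
    connected_interior_torus_tile interior_torus_tile_homeomorphic_open_solid_torus)
  show "\<exists>B :: nat \<Rightarrow> (real^3) set. (\<forall>i<4. congruent (B i) (cbox 0 (vector [4, 2, 1]))) \<and>
      (\<forall>i<4. \<forall>j<4. i \<noteq> j \<longrightarrow> interior (B i) \<inter> interior (B j) = {}) \<and> torus_tile = (\<Union>i<4. B i)"
    using brick_congruent interior_brick_disjoint torus_tile_eq_Union_brick by blast
  have "cbox 0 (vector [8, 4, 2]) = torus_tile \<union> half_turn ` torus_tile"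
    by (simp add: torus_tile_Un_half_turn box3_def flip: zero_eq_vector_3)
  then show "\<exists>g. half_turn_motion g \<and> interior torus_tile \<inter> interior (g ` torus_tile) = {} \<and>
      congruent (torus_tile \<union> g ` torus_tile) (cbox 0 (vector [8, 4, 2]))"
    using half_turn_motion_half_turn interior_torus_tile_half_turn congruent_refl by metis
  show "\<exists>T :: nat \<Rightarrow> (real^3) set. (\<forall>i<8. congruent (T i) torus_tile) \<and>
      (\<forall>i<8. \<forall>j<8. i \<noteq> j \<longrightarrow> interior (T i) \<inter> interior (T j) = {}) \<and>
      (\<Union>i<8. T i) = (\<lambda>x. 2 *\<^sub>R x) ` torus_tile"
    using tile_congruent interior_tile_disjoint Union_tile by blast
qed

end
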